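(* Let $f:\{-1,1\}^n\to\{-1,1\}$ be computable by a parity decision tree of depth $d$. Then $$\sum_{i=1}^n\hat f(i)\le\sqrt{2d}.$$
   Context: $\hat f(i)=\mathbf{E}_x[f(x)x_i]$ over uniform $x\in\{-1,1\}^n$. A parity decision tree is a rooted full binary tree whose internal nodes are labelled by subsets $S\subseteq[n]$, whose two outgoing edges are labelled $-1$ and $1$, and whose leaves are labelled by values in $\{-1,1\}$; an input $x$ follows from a node labelled $S$ the edge labelled $\prod_{i\in S}x_i$. It computes $f$ if every input $x$ reaches a leaf labelled $f(x)$; its depth is the maximum number of internal nodes on a root-to-leaf path. *)

theory Defs
  imports "HOL-Analysis.Analysis"
begin

text \<open>The Boolean cube {-1,1}^n, with coordinates indexed by 0..n-1; coordinates
  outside {..<n} are fixed to 1 so the cube is a finite set of 2^n points.\<close>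
definition cube :: "nat \<Rightarrow> (nat \<Rightarrow> int) set" where
  "cube n = {x. (\<forall>i<n. x i \<in> {-1, 1}) \<and> (\<forall>i\<ge>n. x i = 1)}"

definition fourier1 :: "nat \<Rightarrow> ((nat \<Rightarrow> int) \<Rightarrow> int) \<Rightarrow> nat \<Rightarrow> real" where
  "fourier1 n f i = (\<Sum>x\<in>cube n. real_of_int (f x * x i)) / 2 ^ n"

datatype pdt = PLeaf int | PNode "nat set" pdt pdt

fun pdt_eval :: "pdt \<Rightarrow> (nat \<Rightarrow> int) \<Rightarrow> int" where
  "pdt_eval (PLeaf b) x = b"
| "pdt_eval (PNode S tm tp) x =
     (if (\<Prod>i\<in>S. x i) = -1 then pdt_eval tm x else pdt_eval tp x)"

fun pdt_depth :: "pdt \<Rightarrow> nat" where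
  "pdt_depth (PLeaf b) = 0"
| "pdt_depth (PNode S tm tp) = Suc (max (pdt_depth tm) (pdt_depth tp))"

fun pdt_wf :: "nat \<Rightarrow> pdt \<Rightarrow> bool" where
  "pdt_wf n (PLeaf b) = (b \<in> {-1, 1})"
| "pdt_wf n (PNode S tm tp) = (S \<subseteq> {..<n} \<and> pdt_wf n tm \<and> pdt_wf n tp)"

definition pdt_computes :: "nat \<Rightarrow> pdt \<Rightarrow> ((nat \<Rightarrow> int) \<Rightarrow> int) \<Rightarrow> bool" where
  "pdt_computes n T f = (\<forall>x\<in>cube n. pdt_eval T x = f x)"

end

theory Submission
  imports Defs
begin

text \<open>Let \<open>L x = x\<^sub>1 + \<dots> + x\<^sub>n\<close>, so that the sum of the degree-1 coefficients is
  \<open>2\<^sup>-\<^sup>n \<Sum>\<^sub>x f x L x\<close>. On every affine subspace A of codimension k, L has variance at least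
  \<open>n - 2k\<close>: coordinates and products of two coordinates are constant or balanced on A, the
  non-constant coordinates fall into classes of coordinates that agree up to sign, every class
  of odd size contributes at least 1, and each pinned coordinate and each discarded pair of
  equivalent coordinates costs one dimension. Hence \<open>(\<Sum>\<^sub>A L)\<^sup>2 \<le> |A| (\<Sum>\<^sub>A L\<^sup>2 - |A| (n - 2k))\<close>.
  A parity decision tree of depth d splits the cube into such subspaces of codimension at most d,
  with f constant on each, and Cauchy-Schwarz over the leaves (an induction on the tree) gives
  \<open>(\<Sum>\<^sub>x f x L x)\<^sup>2 \<le> 2\<^sup>n (\<Sum>\<^sub>x L x\<^sup>2 - 2\<^sup>n (n - 2d)) = 4\<^sup>n 2d\<close>.\<close>

lemma cube_coord: "x \<in> cube n \<Longrightarrow> x i = 1 \<or> x i = -1"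
  unfolding cube_def by (cases "i < n") auto

lemma cube_coord_square: "x \<in> cube n \<Longrightarrow> x i * x i = 1"
  using cube_coord[of x n i] by auto

lemma bij_betw_cube_Pow: "bij_betw (\<lambda>x. {i. x i = -1}) (cube n) (Pow {..<n})"
proof (rule bij_betw_byWitness[where f' = "\<lambda>U i. if i \<in> U then -1 else 1"])
  show "\<forall>x\<in>cube n. (\<lambda>i. if i \<in> {i. x i = -1} then -1 else 1) = x"
    using cube_coord by fastforce
  show "(\<lambda>x. {i. x i = -1}) ` cube n \<subseteq> Pow {..<n}"
    by (auto simp: cube_def) (metis leI one_neq_neg_one)
qed (auto simp: cube_def split: if_splits)

lemma card_cube: "card (cube n) = 2 ^ n"
  using bij_betw_same_card[OF bij_betw_cube_Pow] by (simp add: card_Pow)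

lemma finite_cube: "finite (cube n)"
  using bij_betw_finite[OF bij_betw_cube_Pow] by simp

definition parity :: "nat set \<Rightarrow> (nat \<Rightarrow> int) \<Rightarrow> int" where
  "parity S x = (\<Prod>i\<in>S. x i)"

lemma parity_cube:
  assumes "x \<in> cube n"
  shows "parity S x = 1 \<or> parity S x = -1"
proof -
  have "\<bar>x i\<bar> = 1" for i
    using cube_coord[OF assms, of i] by auto
  then have "\<bar>parity S x\<bar> = 1"
    unfolding parity_def abs_prod by simp
  then show ?thesis by linarith
qed

definition triple_prod :: "(nat \<Rightarrow> int) \<Rightarrow> (nat \<Rightarrow> int) \<Rightarrow> (nat \<Rightarrow> int) \<Rightarrow> nat \<Rightarrow> int" where
  "triple_prod x y z = (\<lambda>i. x i * y i * z i)"

text \<open>In the \<open>\<plusminus>1\<close> encoding \<open>x y z\<close> is \<open>x + y + z\<close> over GF(2), so the nonempty sets closed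
  under it are the affine subspaces of the cube; the inputs reaching a node of a parity
  decision tree form such a set.\<close>
definition affine_closed :: "(nat \<Rightarrow> int) set \<Rightarrow> bool" where
  "affine_closed A \<longleftrightarrow> (\<forall>x\<in>A. \<forall>y\<in>A. \<forall>z\<in>A. triple_prod x y z \<in> A)"

lemma parity_triple_prod: "parity S (triple_prod x y z) = parity S x * parity S y * parity S z"
  unfolding parity_def triple_prod_def by (simp add: prod.distrib)

lemma affine_closed_cube: "affine_closed (cube n)"
  unfolding affine_closed_def
proof (intro ballI)
  fix x y z assume "x \<in> cube n" "y \<in> cube n" "z \<in> cube n"
  then have "x i * y i * z i \<in> {-1, 1}" for i
    using cube_coord[of x n i] cube_coord[of y n i] cube_coord[of z n i] by auto
  moreover have "x i * y i * z i = 1" if "i \<ge> n" for i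
    using \<open>x \<in> cube n\<close> \<open>y \<in> cube n\<close> \<open>z \<in> cube n\<close> that by (simp add: cube_def)
  ultimately show "triple_prod x y z \<in> cube n"
    by (simp add: cube_def triple_prod_def)
qed

lemma sum_parity_nonconstant:
  assumes sub: "A \<subseteq> cube n" and closed: "affine_closed A"
    and y: "y \<in> A" and z: "z \<in> A" and differ: "parity S y \<noteq> parity S z"
  shows "(\<Sum>x\<in>A. parity S x) = 0"
proof -
  define \<phi> where "\<phi> x = triple_prod x y z" for x
  have "\<phi> (\<phi> x) = x" for x
  proof
    fix i
    have "y i * y i = 1" "z i * z i = 1"
      using cube_coord_square sub y z by blast+
    then show "\<phi> (\<phi> x) i = x i"
      unfolding \<phi>_def triple_prod_def by (metis mult.commute mult.left_commute mult_1_right)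
  qed
  moreover have "\<phi> x \<in> A" if "x \<in> A" for x
    using closed that y z by (simp add: affine_closed_def \<phi>_def)
  ultimately have "bij_betw \<phi> A A"
    by (intro bij_betw_byWitness[where f' = \<phi>]) auto
  moreover have "parity S (\<phi> x) = - parity S x" for x
  proof -
    have "y \<in> cube n" "z \<in> cube n" using sub y z by auto
    then have "parity S y * parity S z = -1"
      using parity_cube[of y n S] parity_cube[of z n S] differ by auto
    then show ?thesis
      by (simp add: \<phi>_def parity_triple_prod mult.assoc)
  qed
  ultimately have "(\<Sum>x\<in>A. parity S x) = - (\<Sum>x\<in>A. parity S x)"
    using sum.reindex_bij_betw[of \<phi> A A "parity S"] by (simp add: sum_negf)
  then show ?thesis by simp
qed

definition flip :: "nat set \<Rightarrow> (nat \<Rightarrow> int) \<Rightarrow> nat \<Rightarrow> int" where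
  "flip G x = (\<lambda>i. if i \<in> G then - x i else x i)"

lemma flip_cube: "x \<in> cube n \<Longrightarrow> G \<subseteq> {..<n} \<Longrightarrow> flip G x \<in> cube n"
  using cube_coord[of x n] by (auto simp: cube_def flip_def)

lemma flip_eq_flip_iff: "flip G x = flip G' x' \<longleftrightarrow> x' = flip ((G - G') \<union> (G' - G)) x"
  by (auto simp: flip_def fun_eq_iff)

lemma parity_flip_singleton:
  assumes "finite U" "U \<inter> G = {z}"
  shows "parity U (flip G x) = - parity U x"
proof -
  have z: "z \<in> U" using assms(2) by blast
  have "parity U (flip G x) = (\<Prod>i\<in>U. if i = z then - x i else x i)"
    unfolding parity_def using assms(2) by (intro prod.cong) (auto simp: flip_def)
  also have "\<dots> = - x z * (\<Prod>i\<in>U - {z}. x i)"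
    using prod.remove[OF assms(1) z, of "\<lambda>i. if i = z then - x i else x i"] by simp
  also have "\<dots> = - parity U x"
    unfolding parity_def using prod.remove[OF assms(1) z, of x] by simp
  finally show ?thesis .
qed

text \<open>Each coordinate of Z is isolated by a parity that is constant on A, so flipping
  distinct subsets of Z moves A to pairwise disjoint translates inside the cube.\<close>
lemma inj_on_flip:
  assumes sub: "A \<subseteq> cube n"
    and isolated: "\<And>z. z \<in> Z \<Longrightarrow> \<exists>U. finite U \<and> U \<inter> Z = {z} \<and> (\<forall>x\<in>A. \<forall>y\<in>A. parity U x = parity U y)"
  shows "inj_on (\<lambda>(G, x). flip G x) (Pow Z \<times> A)"
proof (rule inj_onI, clarify)
  fix G x G' x'
  assume G: "G \<subseteq> Z" "G' \<subseteq> Z" and x: "x \<in> A" "x' \<in> A" and eq: "flip G x = flip G' x'"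
  define H where "H = (G - G') \<union> (G' - G)"
  have x': "x' = flip H x" using eq unfolding H_def by (rule iffD1[OF flip_eq_flip_iff])
  have "H = {}"
  proof (rule ccontr)
    assume "H \<noteq> {}"
    then obtain z where "z \<in> H" by blast
    then have "z \<in> Z" using G by (auto simp: H_def)
    then obtain U where U: "finite U" "U \<inter> Z = {z}" and const: "\<forall>x\<in>A. \<forall>y\<in>A. parity U x = parity U y"
      using isolated by metis
    have "U \<inter> H = {z}"
      using U(2) \<open>z \<in> H\<close> G by (auto simp: H_def)
    then have "parity U x' = - parity U x"
      unfolding x' by (rule parity_flip_singleton[OF U(1)])
    moreover have "parity U x' = parity U x" using const x by blast
    moreover have "parity U x \<noteq> 0" using parity_cube[of x n U] sub x by auto
    ultimately show False by simp
  qed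
  then show "G = G' \<and> x = x'"
    using x' by (auto simp: H_def flip_def)
qed

lemma two_pow_card_mult_card_le:
  assumes sub: "A \<subseteq> cube n" and Z: "Z \<subseteq> {..<n}"
    and isolated: "\<And>z. z \<in> Z \<Longrightarrow> \<exists>U. finite U \<and> U \<inter> Z = {z} \<and> (\<forall>x\<in>A. \<forall>y\<in>A. parity U x = parity U y)"
  shows "2 ^ card Z * card A \<le> 2 ^ n"
proof -
  have "(\<lambda>(G, x). flip G x) ` (Pow Z \<times> A) \<subseteq> cube n"
  proof clarify
    fix G x assume "G \<subseteq> Z" "x \<in> A"
    then show "flip G x \<in> cube n" using sub Z by (intro flip_cube) auto
  qed
  with inj_on_flip[OF sub isolated] have "card (Pow Z \<times> A) \<le> card (cube n)"
    by (rule card_inj_on_le[OF _ _ finite_cube])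
  moreover have "finite Z" using Z finite_subset by blast
  ultimately show ?thesis
    by (simp add: card_cartesian_product card_Pow card_cube)
qed

lemma odd_sum_of_signs:
  fixes c :: "'a \<Rightarrow> int"
  assumes "finite K" "\<And>i. i \<in> K \<Longrightarrow> c i = 1 \<or> c i = -1" "odd (card K)"
  shows "odd (sum c K)"
proof -
  have "even (sum c K + int (card K))"
    using assms(1,2)
  proof (induction K rule: finite_induct)
    case (insert k K)
    have split: "sum c (insert k K) + int (card (insert k K)) = (c k + 1) + (sum c K + int (card K))"
      using insert.hyps by simp
    have "even (c k + 1)" using insert.prems[of k] by auto
    moreover have "even (sum c K + int (card K))" using insert.IH insert.prems by blast
    ultimately show ?case unfolding split by simp
  qed simp
  with assms(3) show ?thesis by simp
qed

lemma odd_card_class_remove_pair: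
  assumes equiv: "equivp rel" and "finite X" "i \<in> X" "j \<in> X" "i \<noteq> j" "rel i j"
  shows "odd (card {k\<in>X - {i, j}. rel k r}) \<longleftrightarrow> odd (card {k\<in>X. rel k r})"
proof (cases "rel i r")
  case True
  then have "rel j r"
    using assms(6) equiv by (meson equivp_symp equivp_transp)
  with True assms(3,4) have "{k\<in>X. rel k r} = insert i (insert j {k\<in>X - {i, j}. rel k r})"
    by blast
  with assms(2,5) show ?thesis by simp
next
  case False
  then have "\<not> rel j r"
    using assms(6) equiv by (meson equivp_transp)
  with False have "{k\<in>X. rel k r} = {k\<in>X - {i, j}. rel k r}"
    by blast
  then show ?thesis by simp
qed

text \<open>Pairs of distinct equivalent elements are removed into Z (one member of each pair
  stays outside Z as its partner); what remains is a set R of pairwise inequivalent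
  representatives of the classes of odd size.\<close>
lemma equivp_odd_class_representatives:
  assumes "finite X" and equiv: "equivp rel"
  obtains R Z where "R \<subseteq> X" "Z \<subseteq> X" "card X = card R + 2 * card Z"
    "\<And>r. r \<in> R \<Longrightarrow> odd (card {i\<in>X. rel i r})"
    "\<And>r s. r \<in> R \<Longrightarrow> s \<in> R \<Longrightarrow> rel r s \<Longrightarrow> r = s"
    "\<And>z. z \<in> Z \<Longrightarrow> \<exists>w\<in>X - Z. rel z w"
  using assms(1)
proof (induction X arbitrary: thesis rule: finite_psubset_induct)
  case (psubset X)
  show ?case
  proof (cases "\<exists>i\<in>X. \<exists>j\<in>X. i \<noteq> j \<and> rel i j")
    case False
    then have "{i\<in>X. rel i r} = {r}" if "r \<in> X" for r
      using that equivp_reflp[OF equiv] by blast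
    with False show ?thesis
      by (intro psubset.prems[of X "{}"]) auto
  next
    case True
    then obtain i j where ij: "i \<in> X" "j \<in> X" "i \<noteq> j" "rel i j" by blast
    define X' where "X' = X - {i, j}"
    have "X' \<subset> X" using ij by (auto simp: X'_def)
    then obtain R Z where R: "R \<subseteq> X'" and Z: "Z \<subseteq> X'" and card: "card X' = card R + 2 * card Z"
      and R_odd: "\<And>r. r \<in> R \<Longrightarrow> odd (card {k\<in>X'. rel k r})"
      and R_inequiv: "\<And>r s. r \<in> R \<Longrightarrow> s \<in> R \<Longrightarrow> rel r s \<Longrightarrow> r = s"
      and Z_partner: "\<And>z. z \<in> Z \<Longrightarrow> \<exists>w\<in>X' - Z. rel z w"
      by (rule psubset.IH) (rule that)
    have fin: "finite X'" using psubset.hyps by (simp add: X'_def)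
    have X: "X = insert i (insert j X')" "i \<notin> X'" "j \<notin> X'"
      using ij by (auto simp: X'_def)
    have "i \<notin> Z" using Z X(2) by blast
    then have "card (insert i Z) = Suc (card Z)"
      using finite_subset[OF Z fin] by simp
    then have "card X = card R + 2 * card (insert i Z)"
      using card X fin ij(3) by simp
    moreover have "odd (card {k\<in>X. rel k r})" if "r \<in> R" for r
      using R_odd[OF that] odd_card_class_remove_pair[OF equiv psubset.hyps ij] by (simp add: X'_def)
    moreover have "\<exists>w\<in>X - insert i Z. rel z w" if z: "z \<in> insert i Z" for z
    proof (cases "z = i")
      case True
      then show ?thesis using ij Z X(3) by (intro bexI[of _ j]) auto
    next
      case False
      then obtain w where "w \<in> X' - Z" "rel z w" using Z_partner z by blast
      then show ?thesis using X by (intro bexI[of _ w]) auto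
    qed
    moreover have "R \<subseteq> X" "insert i Z \<subseteq> X"
      using R Z ij(1) by (auto simp: X'_def)
    ultimately show ?thesis
      using R_inequiv by (intro psubset.prems[of R "insert i Z"])
  qed
qed

lemma bessel_inequality:
  fixes L :: "'a \<Rightarrow> 'b::linordered_idom" and \<phi> :: "'c \<Rightarrow> 'a \<Rightarrow> 'b"
  assumes "finite A" "finite R"
    and mean_zero: "\<And>r. r \<in> R \<Longrightarrow> (\<Sum>x\<in>A. \<phi> r x) = 0"
    and orthogonal: "\<And>r s. r \<in> R \<Longrightarrow> s \<in> R \<Longrightarrow>
      (\<Sum>x\<in>A. \<phi> r x * \<phi> s x) = (if r = s then of_nat (card A) else 0)"
  shows "(\<Sum>x\<in>A. L x)\<^sup>2 + (\<Sum>r\<in>R. (\<Sum>x\<in>A. L x * \<phi> r x)\<^sup>2) \<le> of_nat (card A) * (\<Sum>x\<in>A. (L x)\<^sup>2)"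
proof (cases "A = {}")
  case False
  define a where "a = (of_nat (card A) :: 'b)"
  define M where "M = (\<Sum>x\<in>A. L x)"
  define c where "c r = (\<Sum>x\<in>A. L x * \<phi> r x)" for r
  \<comment> \<open>the residual of a L after projecting onto the constants and the \<phi> r, scaled to avoid division\<close>
  define h where "h x = a * L x - M - (\<Sum>r\<in>R. c r * \<phi> r x)" for x
  have a_pos: "0 < a" using False assms(1) by (simp add: a_def card_gt_0_iff)
  have h_inner: "(\<Sum>x\<in>A. h x * g x) =
      a * (\<Sum>x\<in>A. L x * g x) - M * (\<Sum>x\<in>A. g x) - (\<Sum>r\<in>R. c r * (\<Sum>x\<in>A. \<phi> r x * g x))" for g
  proof -
    have "(\<Sum>x\<in>A. (\<Sum>r\<in>R. c r * \<phi> r x) * g x) = (\<Sum>r\<in>R. c r * (\<Sum>x\<in>A. \<phi> r x * g x))"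
      by (simp add: sum_distrib_left sum_distrib_right mult.assoc sum.swap[of _ A])
    then show ?thesis
      by (simp add: h_def left_diff_distrib sum_subtractf sum_distrib_left mult.assoc)
  qed
  have h_const: "(\<Sum>x\<in>A. h x) = 0"
    using h_inner[of "\<lambda>_. 1"] mean_zero by (simp add: M_def a_def)
  have h_orth: "(\<Sum>x\<in>A. h x * \<phi> s x) = 0" if "s \<in> R" for s
  proof -
    have "(\<Sum>r\<in>R. c r * (\<Sum>x\<in>A. \<phi> r x * \<phi> s x)) = c s * a"
      using that assms(2) by (simp add: orthogonal a_def if_distrib[of "\<lambda>t. c _ * t"] cong: if_cong)
    then show ?thesis
      using h_inner[of "\<phi> s"] mean_zero[OF that] by (simp add: c_def mult.commute)
  qed
  have "0 \<le> (\<Sum>x\<in>A. h x * h x)"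
    by (simp add: sum_nonneg)
  also have "(\<Sum>x\<in>A. h x * h x) = a * (\<Sum>x\<in>A. h x * L x)"
    using h_inner[of h] h_const h_orth by (simp add: mult.commute)
  also have "(\<Sum>x\<in>A. h x * L x) = a * (\<Sum>x\<in>A. (L x)\<^sup>2) - M\<^sup>2 - (\<Sum>r\<in>R. (c r)\<^sup>2)"
    using h_inner[of L] by (simp add: M_def c_def power2_eq_square mult.commute)
  finally show ?thesis
    using a_pos by (simp add: zero_le_mult_iff M_def c_def a_def)
qed simp

lemma square_add_le_mult_add:
  fixes s t a b c d :: "'a::linordered_idom"
  assumes "s\<^sup>2 \<le> a * b" "t\<^sup>2 \<le> c * d" "0 \<le> a" "0 \<le> b" "0 \<le> c" "0 \<le> d"
  shows "(s + t)\<^sup>2 \<le> (a + c) * (b + d)"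
proof -
  have "(2 * (s * t))\<^sup>2 = 4 * (s\<^sup>2 * t\<^sup>2)"
    by (simp add: power_mult_distrib)
  also have "\<dots> \<le> 4 * ((a * b) * (c * d))"
    using assms by (intro mult_left_mono mult_mono) auto
  also have "\<dots> \<le> (a * d + c * b)\<^sup>2"
  proof -
    have "(a * d + c * b)\<^sup>2 = (a * d - c * b)\<^sup>2 + 4 * ((a * b) * (c * d))"
      by algebra
    then show ?thesis using zero_le_power2[of "a * d - c * b"] by linarith
  qed
  finally have "2 * (s * t) \<le> a * d + c * b"
    by (rule power2_le_imp_le) (use assms in auto)
  moreover have "(s + t)\<^sup>2 = s\<^sup>2 + 2 * (s * t) + t\<^sup>2" "(a + c) * (b + d) = a * b + (a * d + c * b) + c * d"
    by (simp_all add: power2_sum algebra_simps)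
  ultimately show ?thesis
    using assms(1,2) by linarith
qed

definition coord_sum :: "nat \<Rightarrow> (nat \<Rightarrow> int) \<Rightarrow> int" where
  "coord_sum n x = (\<Sum>i<n. x i)"

text \<open>For an affine subspace A, \<open>2 ^ n \<le> card A * 2 ^ m\<close> says that its codimension is at most m,
  and then \<open>card A * slack n A m\<close> bounds the square of the sum of \<open>coord_sum n\<close> over A.\<close>
definition slack :: "nat \<Rightarrow> (nat \<Rightarrow> int) set \<Rightarrow> nat \<Rightarrow> int" where
  "slack n A j = (\<Sum>x\<in>A. (coord_sum n x)\<^sup>2) - int (card A) * (int n - 2 * int j)"

locale affine_subcube =
  fixes n :: nat and A :: "(nat \<Rightarrow> int) set"
  assumes subset_cube: "A \<subseteq> cube n" and nonempty: "A \<noteq> {}" and closed: "affine_closed A"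
begin

lemma finite_A: "finite A"
  using finite_subset[OF subset_cube finite_cube] .

lemma coord_square: "x \<in> A \<Longrightarrow> x i * x i = 1"
  using subset_cube cube_coord_square by blast

definition correlated :: "nat \<Rightarrow> nat \<Rightarrow> bool" where
  "correlated i j \<longleftrightarrow> (\<forall>x\<in>A. \<forall>y\<in>A. x i * x j = y i * y j)"

definition pinned :: "nat set" where
  "pinned = {i. i < n \<and> (\<forall>x\<in>A. \<forall>y\<in>A. x i = y i)}"

definition free :: "nat set" where
  "free = {..<n} - pinned"

lemma equivp_correlated: "equivp correlated"
proof (rule equivpI)
  show "reflp correlated"
    unfolding reflp_def correlated_def using coord_square by metis
  show "symp correlated"
    unfolding symp_def correlated_def by (metis mult.commute)
  show "transp correlated"
  proof (rule transpI)
    fix i j k assume ij: "correlated i j" and jk: "correlated j k"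
    have "x i * x k = (x i * x j) * (x j * x k)" if "x \<in> A" for x
      using coord_square[OF that, of j] by (simp add: algebra_simps)
    with ij jk show "correlated i k"
      unfolding correlated_def by metis
  qed
qed

lemma sum_coord_free:
  assumes "i \<in> free"
  shows "(\<Sum>x\<in>A. x i) = 0"
proof -
  obtain y z where "y \<in> A" "z \<in> A" "y i \<noteq> z i"
    using assms by (auto simp: free_def pinned_def)
  then have "(\<Sum>x\<in>A. parity {i} x) = 0"
    by (intro sum_parity_nonconstant[OF subset_cube closed]) (simp_all add: parity_def)
  then show ?thesis by (simp add: parity_def)
qed

lemma sum_coord_mult_uncorrelated:
  assumes "\<not> correlated i j"
  shows "(\<Sum>x\<in>A. x i * x j) = 0"
proof -
  have "i \<noteq> j"
    using assms equivp_reflp[OF equivp_correlated] by blast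
  obtain y z where "y \<in> A" "z \<in> A" "y i * y j \<noteq> z i * z j"
    using assms by (auto simp: correlated_def)
  then have "(\<Sum>x\<in>A. parity {i, j} x) = 0"
    using \<open>i \<noteq> j\<close> by (intro sum_parity_nonconstant[OF subset_cube closed]) (simp_all add: parity_def)
  then show ?thesis
    using \<open>i \<noteq> j\<close> by (simp add: parity_def)
qed

lemma sum_coord_mult_correlated:
  assumes "correlated i j" "p \<in> A"
  shows "(\<Sum>x\<in>A. x i * x j) = int (card A) * (p i * p j)"
proof -
  have "x i * x j = p i * p j" if "x \<in> A" for x
    using assms that unfolding correlated_def by blast
  then have "(\<Sum>x\<in>A. x i * x j) = (\<Sum>x\<in>A. p i * p j)"
    by (rule sum.cong[OF refl])
  then show ?thesis by simp
qed

lemma pinned_if_correlated_pinned: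
  assumes "correlated i r" "i \<in> pinned" "r < n"
  shows "r \<in> pinned"
proof -
  have "x r = y r" if "x \<in> A" "y \<in> A" for x y
  proof -
    have "x r = x i * (x i * x r)" "y r = y i * (y i * y r)"
      using coord_square[OF that(1), of i] coord_square[OF that(2), of i]
      by (metis mult.assoc mult_1)+
    moreover have "x i = y i"
      using assms(2) that unfolding pinned_def by blast
    moreover have "x i * x r = y i * y r"
      using assms(1) that unfolding correlated_def by blast
    ultimately show ?thesis by metis
  qed
  with assms(3) show ?thesis by (simp add: pinned_def)
qed

lemma ex_isolating_constant_parity:
  assumes Z: "Z \<subseteq> free" and partner: "\<And>z. z \<in> Z \<Longrightarrow> \<exists>w\<in>free - Z. correlated z w"
    and z: "z \<in> pinned \<union> Z"
  shows "\<exists>U. finite U \<and> U \<inter> (pinned \<union> Z) = {z} \<and> (\<forall>x\<in>A. \<forall>y\<in>A. parity U x = parity U y)"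
proof (cases "z \<in> pinned")
  case True
  have singleton: "parity {z} x = x z" for x
    by (simp add: parity_def)
  show ?thesis
  proof (intro exI conjI)
    show "finite {z}" by simp
    show "{z} \<inter> (pinned \<union> Z) = {z}" using True by blast
    show "\<forall>x\<in>A. \<forall>y\<in>A. parity {z} x = parity {z} y"
      unfolding singleton using True unfolding pinned_def by blast
  qed
next
  case False
  with z obtain w where w: "w \<in> free - Z" "correlated z w"
    using partner by blast
  then have "w \<noteq> z" "w \<notin> pinned" using z by (auto simp: free_def)
  then have pair: "parity {z, w} x = x z * x w" for x
    by (simp add: parity_def)
  show ?thesis
  proof (intro exI conjI)
    show "finite {z, w}" by simp
    show "{z, w} \<inter> (pinned \<union> Z) = {z}"
      using False z w(1) \<open>w \<notin> pinned\<close> by blast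
    show "\<forall>x\<in>A. \<forall>y\<in>A. parity {z, w} x = parity {z, w} y"
      unfolding pair using w(2) unfolding correlated_def by blast
  qed
qed

lemma card_pinned_add_card_le:
  assumes size: "2 ^ n \<le> card A * 2 ^ m" and Z: "Z \<subseteq> free"
    and partner: "\<And>z. z \<in> Z \<Longrightarrow> \<exists>w\<in>free - Z. correlated z w"
  shows "card pinned + card Z \<le> m"
proof -
  have "pinned \<union> Z \<subseteq> {..<n}"
    using Z by (auto simp: pinned_def free_def)
  then have "2 ^ card (pinned \<union> Z) * card A \<le> 2 ^ n"
    by (rule two_pow_card_mult_card_le[OF subset_cube _ ex_isolating_constant_parity[OF Z partner]])
  with size have "card A * 2 ^ card (pinned \<union> Z) \<le> card A * 2 ^ m"
    by (metis mult.commute order_trans)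
  then have "(2::nat) ^ card (pinned \<union> Z) \<le> 2 ^ m"
    using finite_A nonempty by (simp add: card_gt_0_iff)
  then have "card (pinned \<union> Z) \<le> m"
    by simp
  moreover have "pinned \<inter> Z = {}" "finite pinned" "finite Z"
    using Z finite_subset[OF Z] by (auto simp: free_def pinned_def)
  ultimately show ?thesis
    by (simp add: card_Un_disjoint)
qed

lemma card_le_abs_sum_coord_sum_mult:
  assumes r: "r \<in> free" and odd: "odd (card {i\<in>free. correlated i r})"
  shows "int (card A) \<le> \<bar>\<Sum>x\<in>A. coord_sum n x * x r\<bar>"
proof -
  obtain p where p: "p \<in> A" using nonempty by blast
  define K where "K = {i\<in>free. correlated i r}"
  have K: "{i. i < n \<and> correlated i r} = K"
    using r pinned_if_correlated_pinned by (auto simp: K_def free_def)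
  have "(\<Sum>x\<in>A. coord_sum n x * x r) = (\<Sum>i<n. \<Sum>x\<in>A. x i * x r)"
    by (simp add: coord_sum_def sum_distrib_right sum.swap[of _ A])
  also have "\<dots> = (\<Sum>i<n. if correlated i r then int (card A) * (p i * p r) else 0)"
    by (intro sum.cong) (simp_all add: sum_coord_mult_correlated[OF _ p] sum_coord_mult_uncorrelated)
  also have "\<dots> = int (card A) * (\<Sum>i\<in>K. p i * p r)"
    by (simp add: sum.inter_filter[symmetric] K sum_distrib_left)
  finally have sum_eq: "(\<Sum>x\<in>A. coord_sum n x * x r) = int (card A) * (\<Sum>i\<in>K. p i * p r)" .
  have "odd (\<Sum>i\<in>K. p i * p r)"
  proof (rule odd_sum_of_signs)
    show "finite K" by (simp add: K_def free_def)
    show "odd (card K)" using odd by (simp add: K_def)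
    have "p \<in> cube n" using p subset_cube by blast
    then show "p i * p r = 1 \<or> p i * p r = -1" for i
      using cube_coord[of p n i] cube_coord[of p n r] by auto
  qed
  then have "1 \<le> \<bar>\<Sum>i\<in>K. p i * p r\<bar>"
    by (metis abs_ge_zero even_zero int_one_le_iff_zero_less zero_less_abs_iff)
  then show ?thesis
    unfolding sum_eq abs_mult by (simp add: mult_le_cancel_left1)
qed

lemma card_free_add_card_pinned: "card free + card pinned = n"
proof -
  have "pinned \<subseteq> {..<n}" unfolding pinned_def by blast
  then show ?thesis
    using card_mono[of "{..<n}" pinned] finite_subset[of pinned "{..<n}"]
    by (simp add: free_def card_Diff_subset)
qed

lemma odd_class_representatives:
  assumes size: "2 ^ n \<le> card A * 2 ^ m"
  obtains R where "R \<subseteq> free" "int n - 2 * int m \<le> int (card R)"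
    "\<And>r. r \<in> R \<Longrightarrow> odd (card {i\<in>free. correlated i r})"
    "\<And>r s. r \<in> R \<Longrightarrow> s \<in> R \<Longrightarrow> correlated r s \<Longrightarrow> r = s"
proof -
  have "finite free" by (simp add: free_def)
  then obtain R Z where R: "R \<subseteq> free" and Z: "Z \<subseteq> free"
    and card_free: "card free = card R + 2 * card Z"
    and R_odd: "\<And>r. r \<in> R \<Longrightarrow> odd (card {i\<in>free. correlated i r})"
    and R_inequiv: "\<And>r s. r \<in> R \<Longrightarrow> s \<in> R \<Longrightarrow> correlated r s \<Longrightarrow> r = s"
    and Z_partner: "\<And>z. z \<in> Z \<Longrightarrow> \<exists>w\<in>free - Z. correlated z w"
    by (rule equivp_odd_class_representatives[OF _ equivp_correlated]) (rule that)
  have "card pinned + card Z \<le> m"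
    using card_pinned_add_card_le[OF size Z Z_partner] .
  with card_free card_free_add_card_pinned have "int n - 2 * int m \<le> int (card R)"
    by linarith
  then show thesis
    by (rule that[OF R _ R_odd R_inequiv])
qed

lemma square_sum_coord_sum_le:
  assumes size: "2 ^ n \<le> card A * 2 ^ m"
  shows "(\<Sum>x\<in>A. coord_sum n x)\<^sup>2 \<le> int (card A) * slack n A m"
proof -
  define a where "a = int (card A)"
  obtain p where p: "p \<in> A" using nonempty by blast
  obtain R where R: "R \<subseteq> free" and card_R: "int n - 2 * int m \<le> int (card R)"
    and R_odd: "\<And>r. r \<in> R \<Longrightarrow> odd (card {i\<in>free. correlated i r})"
    and R_inequiv: "\<And>r s. r \<in> R \<Longrightarrow> s \<in> R \<Longrightarrow> correlated r s \<Longrightarrow> r = s"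
    by (rule odd_class_representatives[OF size]) (rule that)
  have "finite free" by (simp add: free_def)
  have orth: "(\<Sum>x\<in>A. x r * x s) = (if r = s then a else 0)" if "r \<in> R" "s \<in> R" for r s
  proof (cases "r = s")
    case True
    then show ?thesis
      using sum_coord_mult_correlated[OF equivp_reflp[OF equivp_correlated] p] coord_square[OF p]
      by (simp add: a_def)
  next
    case False
    then show ?thesis using R_inequiv that sum_coord_mult_uncorrelated by auto
  qed
  have "(\<Sum>x\<in>A. coord_sum n x)\<^sup>2 + (\<Sum>r\<in>R. (\<Sum>x\<in>A. coord_sum n x * x r)\<^sup>2)
      \<le> a * (\<Sum>x\<in>A. (coord_sum n x)\<^sup>2)"
    unfolding a_def using R sum_coord_free orth
    by (intro bessel_inequality[OF finite_A finite_subset[OF R \<open>finite free\<close>]]) (auto simp: a_def)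
  moreover have "a\<^sup>2 \<le> (\<Sum>x\<in>A. coord_sum n x * x r)\<^sup>2" if "r \<in> R" for r
  proof -
    have "a \<le> \<bar>\<Sum>x\<in>A. coord_sum n x * x r\<bar>"
      unfolding a_def using card_le_abs_sum_coord_sum_mult R R_odd that by blast
    from power_mono[OF this, of 2] show ?thesis by (simp add: a_def)
  qed
  then have "int (card R) * a\<^sup>2 \<le> (\<Sum>r\<in>R. (\<Sum>x\<in>A. coord_sum n x * x r)\<^sup>2)"
    using sum_mono[of R "\<lambda>_. a\<^sup>2"] by simp
  moreover have "a\<^sup>2 * (int n - 2 * int m) \<le> a\<^sup>2 * int (card R)"
    using card_R by (simp add: mult_left_mono)
  ultimately show ?thesis
    by (simp add: slack_def a_def power2_eq_square algebra_simps)
qed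

end

lemma sum_square_coord_sum_cube: "(\<Sum>x\<in>cube n. (coord_sum n x)\<^sup>2) = 2 ^ n * int n"
proof -
  have ones: "(\<lambda>_. 1) \<in> cube n" by (simp add: cube_def)
  interpret affine_subcube n "cube n"
    using ones affine_closed_cube by (intro affine_subcube.intro) auto
  have pair: "(\<Sum>x\<in>cube n. x i * x j) = (if i = j then 2 ^ n else 0)" if "i < n" for i j
  proof (cases "i = j")
    case True
    then show ?thesis
      using sum_coord_mult_correlated[OF equivp_reflp[OF equivp_correlated] ones]
      by (simp add: card_cube)
  next
    case False
    have "(\<lambda>k. if k = i then -1 else 1) \<in> cube n"
      using that by (auto simp: cube_def)
    with ones False have "\<not> correlated i j"
      unfolding correlated_def by force
    with False show ?thesis
      by (simp add: sum_coord_mult_uncorrelated)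
  qed
  have "(\<Sum>x\<in>cube n. (coord_sum n x)\<^sup>2) = (\<Sum>i<n. \<Sum>j<n. \<Sum>x\<in>cube n. x i * x j)"
    by (simp add: coord_sum_def power2_eq_square sum_product sum.swap[of _ "cube n"])
  also have "\<dots> = (\<Sum>i<n. 2 ^ n)"
    by (intro sum.cong) (simp_all add: pair)
  finally show ?thesis by simp
qed

lemma slack_union:
  "finite A \<Longrightarrow> finite B \<Longrightarrow> A \<inter> B = {} \<Longrightarrow> slack n (A \<union> B) j = slack n A j + slack n B j"
  by (simp add: slack_def sum.union_disjoint card_Un_disjoint algebra_simps)

lemma slack_mono: "j \<le> k \<Longrightarrow> slack n A j \<le> slack n A k"
  unfolding slack_def by (intro diff_left_mono mult_left_mono) auto

lemma square_le_card_mult_slack_mono: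
  "s\<^sup>2 \<le> int (card A) * slack n A j \<Longrightarrow> j \<le> k \<Longrightarrow> s\<^sup>2 \<le> int (card A) * slack n A k"
  by (meson mult_left_mono of_nat_0_le_iff order_trans slack_mono)

lemma slack_nonneg:
  assumes "A \<subseteq> cube n" "affine_closed A" "A = {} \<or> 2 ^ n \<le> card A * 2 ^ m"
  shows "0 \<le> slack n A m"
proof (cases "A = {}")
  case False
  interpret affine_subcube n A
    using assms False by (intro affine_subcube.intro)
  have "0 \<le> int (card A) * slack n A m"
    using square_sum_coord_sum_le[of m] assms(3) False
    by (meson order_trans zero_le_power2)
  with False finite_A show ?thesis
    by (simp add: zero_le_mult_iff card_gt_0_iff)
qed (simp add: slack_def)

lemma affine_closed_parity_fiber:
  assumes "affine_closed A" "c = 1 \<or> c = -1"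
  shows "affine_closed {x\<in>A. parity S x = c}"
  using assms unfolding affine_closed_def by (auto simp: parity_triple_prod)

lemma parity_fibers_partition:
  assumes "A \<subseteq> cube n"
  shows "A = {x\<in>A. parity S x = -1} \<union> {x\<in>A. parity S x = 1}"
proof -
  have "parity S x = -1 \<or> parity S x = 1" if "x \<in> A" for x
    using that assms parity_cube by blast
  then show ?thesis by blast
qed

lemma parity_fibers_balanced:
  assumes sub: "A \<subseteq> cube n" and closed: "affine_closed A"
  shows "{x\<in>A. parity S x = 1} = {} \<or> {x\<in>A. parity S x = -1} = {} \<or>
    card {x\<in>A. parity S x = 1} = card {x\<in>A. parity S x = -1}"
proof (rule ccontr)
  define P where "P = {x\<in>A. parity S x = 1}"
  define N where "N = {x\<in>A. parity S x = -1}"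
  assume "\<not> ?thesis"
  then obtain y z where y: "y \<in> A" "parity S y = 1" and z: "z \<in> A" "parity S z = -1"
    by blast
  have "A = P \<union> N" "P \<inter> N = {}"
    using parity_fibers_partition[OF sub, of S] by (auto simp: P_def N_def)
  moreover have "finite P" "finite N"
    using finite_subset[OF sub finite_cube] by (simp_all add: P_def N_def)
  ultimately have "(\<Sum>x\<in>A. parity S x) = (\<Sum>x\<in>P. parity S x) + (\<Sum>x\<in>N. parity S x)"
    by (simp add: sum.union_disjoint)
  also have "\<dots> = (\<Sum>x\<in>P. 1) + (\<Sum>x\<in>N. -1)"
    by (intro arg_cong2[where f = "(+)"] sum.cong) (simp_all add: P_def N_def)
  finally have "int (card P) = int (card N)"
    using sum_parity_nonconstant[OF sub closed y(1) z(1)] y z by (simp add: sum_negf)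
  with \<open>\<not> ?thesis\<close> show False by (simp add: P_def N_def)
qed

lemma parity_fiber_size:
  assumes sub: "A \<subseteq> cube n" and closed: "affine_closed A" and c: "c = 1 \<or> c = -1"
    and size: "A = {} \<or> 2 ^ n \<le> card A * 2 ^ m"
  shows "{x\<in>A. parity S x = c} = {} \<or> 2 ^ n \<le> card {x\<in>A. parity S x = c} * 2 ^ Suc m"
proof (cases "{x\<in>A. parity S x = c} = {}")
  case False
  define F where "F c = {x\<in>A. parity S x = c}" for c
  from False have "A \<noteq> {}" "F c \<noteq> {}" by (auto simp: F_def)
  have fin: "finite (F c')" for c' using finite_subset[OF sub finite_cube] by (simp add: F_def)
  have "A = F 1 \<union> F (-1)" "F 1 \<inter> F (-1) = {}"
    using parity_fibers_partition[OF sub, of S] by (auto simp: F_def)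
  then have "card A = card (F 1) + card (F (-1))"
    using fin by (simp add: card_Un_disjoint)
  moreover have "F 1 = {} \<or> F (-1) = {} \<or> card (F 1) = card (F (-1))"
    using parity_fibers_balanced[OF sub closed] by (simp add: F_def)
  ultimately have "card A \<le> card (F c) * 2"
    using c \<open>F c \<noteq> {}\<close> by (elim disjE) simp_all
  have "2 ^ n \<le> card A * 2 ^ m"
    using size \<open>A \<noteq> {}\<close> by blast
  also have "\<dots> \<le> card (F c) * 2 * 2 ^ m"
    using \<open>card A \<le> card (F c) * 2\<close> by (rule mult_right_mono) simp
  finally show ?thesis
    by (simp add: F_def mult.assoc)
qed simp

lemma square_sum_pdt_eval_le:
  assumes "pdt_wf n T" "A \<subseteq> cube n" "affine_closed A" "A = {} \<or> 2 ^ n \<le> card A * 2 ^ m"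
  shows "(\<Sum>x\<in>A. pdt_eval T x * coord_sum n x)\<^sup>2 \<le> int (card A) * slack n A (m + pdt_depth T)"
  using assms
proof (induction T arbitrary: A m)
  case (PLeaf b)
  show ?case
  proof (cases "A = {}")
    case False
    interpret affine_subcube n A
      using PLeaf False by (intro affine_subcube.intro)
    have "b * b = 1" using PLeaf.prems(1) by auto
    then have "(\<Sum>x\<in>A. pdt_eval (PLeaf b) x * coord_sum n x)\<^sup>2 = (\<Sum>x\<in>A. coord_sum n x)\<^sup>2"
      by (simp add: sum_distrib_left[symmetric] power_mult_distrib power2_eq_square)
    with PLeaf.prems(4) False show ?thesis
      using square_sum_coord_sum_le by simp
  qed simp
next
  case (PNode S t1 t2)
  define F where "F c = {x\<in>A. parity S x = c}" for c
  define j where "j = m + pdt_depth (PNode S t1 t2)"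
  have sub: "A \<subseteq> cube n" and closed: "affine_closed A"
    using PNode.prems by auto
  have fin: "finite (F c)" for c
    using finite_subset[OF sub finite_cube] by (simp add: F_def)
  have split: "A = F (-1) \<union> F 1" "F (-1) \<inter> F 1 = {}"
    using parity_fibers_partition[OF sub, of S] by (auto simp: F_def)
  have fibers: "F c \<subseteq> cube n" "affine_closed (F c)" "F c = {} \<or> 2 ^ n \<le> card (F c) * 2 ^ Suc m"
    if "c = 1 \<or> c = -1" for c
    using sub affine_closed_parity_fiber[OF closed that] parity_fiber_size[OF sub closed that PNode.prems(4)]
    by (auto simp: F_def)
  have nonneg: "0 \<le> slack n (F c) j" if "c = 1 \<or> c = -1" for c
  proof -
    have "Suc m \<le> j" by (simp add: j_def)
    then show ?thesis
      using slack_nonneg[OF fibers[OF that]] slack_mono order_trans by blast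
  qed
  have wf: "pdt_wf n t1" "pdt_wf n t2"
    using PNode.prems(1) by simp_all
  have "(\<Sum>x\<in>A. pdt_eval (PNode S t1 t2) x * coord_sum n x)
      = (\<Sum>x\<in>F (-1). pdt_eval t1 x * coord_sum n x) + (\<Sum>x\<in>F 1. pdt_eval t2 x * coord_sum n x)"
    unfolding split(1) using fin split(2) by (simp add: sum.union_disjoint F_def parity_def)
  also have "(\<dots>)\<^sup>2 \<le> (int (card (F (-1))) + int (card (F 1))) * (slack n (F (-1)) j + slack n (F 1) j)"
  proof (rule square_add_le_mult_add)
    show "(\<Sum>x\<in>F (-1). pdt_eval t1 x * coord_sum n x)\<^sup>2 \<le> int (card (F (-1))) * slack n (F (-1)) j"
      using PNode.IH(1)[OF wf(1) fibers[of "-1"]] by (rule square_le_card_mult_slack_mono) (auto simp: j_def)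
    show "(\<Sum>x\<in>F 1. pdt_eval t2 x * coord_sum n x)\<^sup>2 \<le> int (card (F 1)) * slack n (F 1) j"
      using PNode.IH(2)[OF wf(2) fibers[of 1]] by (rule square_le_card_mult_slack_mono) (auto simp: j_def)
  qed (use nonneg in auto)
  also have "\<dots> = int (card A) * slack n A j"
    using fin split by (simp add: card_Un_disjoint slack_union)
  finally show ?case by (simp add: j_def)
qed

lemma sum_fourier1_eq:
  "(\<Sum>i<n. fourier1 n f i) = real_of_int (\<Sum>x\<in>cube n. f x * coord_sum n x) / 2 ^ n"
proof -
  have "(\<Sum>i<n. \<Sum>x\<in>cube n. real_of_int (f x * x i)) = real_of_int (\<Sum>x\<in>cube n. f x * coord_sum n x)"
    by (simp add: coord_sum_def sum_distrib_left sum.swap[of _ "{..<n}"])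
  then show ?thesis
    by (simp add: fourier1_def sum_divide_distrib[symmetric])
qed

theorem theorem3:
  fixes n d :: nat and f :: "(nat \<Rightarrow> int) \<Rightarrow> int" and T :: pdt
  assumes "\<forall>x\<in>cube n. f x \<in> {-1, 1}"
    and "pdt_wf n T"
    and "pdt_computes n T f"
    and "pdt_depth T = d"
  shows "(\<Sum>i<n. fourier1 n f i) \<le> sqrt (2 * real d)"
proof -
  define S where "S = (\<Sum>x\<in>cube n. pdt_eval T x * coord_sum n x)"
  have fourier: "(\<Sum>i<n. fourier1 n f i) = real_of_int S / 2 ^ n"
    using assms(3) unfolding sum_fourier1_eq S_def pdt_computes_def by (simp cong: sum.cong)
  have "S\<^sup>2 \<le> 2 ^ n * slack n (cube n) d"
    using square_sum_pdt_eval_le[OF assms(2) subset_refl affine_closed_cube, of 0] assms(4)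
    by (simp add: S_def card_cube)
  also have "\<dots> = (2 ^ n)\<^sup>2 * (2 * int d)"
    unfolding slack_def sum_square_coord_sum_cube card_cube by (simp add: power2_eq_square algebra_simps)
  finally have "real_of_int (S\<^sup>2) \<le> real_of_int ((2 ^ n)\<^sup>2 * (2 * int d))"
    by (simp only: of_int_le_iff)
  then have "(real_of_int S)\<^sup>2 \<le> (2 ^ n)\<^sup>2 * (2 * real d)"
    by simp
  then have "real_of_int S \<le> sqrt ((2 ^ n)\<^sup>2 * (2 * real d))"
    by (rule real_le_rsqrt)
  also have "\<dots> = 2 ^ n * sqrt (2 * real d)"
    by (simp add: real_sqrt_mult)
  finally show ?thesis
    unfolding fourier by (simp add: divide_le_eq mult.commute)
qed

end
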